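(* Assume the setting described in the context and suppose the event $\mathcal{E}$ holds. There is an absolute constant $C>0$ such that the following holds. Let $p\in\{1,\dots,k-1\}$ and $\gamma\in(0,1)$, let $S^{(p)}\subseteq[n]$ with $|S^{(p)}|=p$, let $\hat{\mathbf{e}}^{(p)}$ be a unit eigenvector for the largest eigenvalue of $\hat{\boldsymbol{\Gamma}}_{S^{(p)},S^{(p)}}$ zero-padded to $\mathbb{R}^n$, and let $S^{(p+1)}$ be the index set of the $p+1$ largest entries of $|\hat{\boldsymbol{\Gamma}}\hat{\mathbf{e}}^{(p)}|$. If $$ m\ \ge\ C\frac{(1+\theta)^2}{\theta^2\gamma^2(1-\sqrt\gamma)^2}(p+1)s^2(p+1)\log n\quad\text{and}\quad \|\mathbf{v}_{S^{(p)}}\|_2\ \ge\ \sqrt{\frac{\gamma}{s(p)}}, $$ then $$ \|\mathbf{v}_{S^{(p+1)}}\|_2\ \ge\ \sqrt{\frac{\gamma}{s(p+1)}}. $$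
   Context: Let $n\ge 2$, $m\ge1$, $\theta>0$, $k\in[n]$; $\mathbf{v}\in\mathbb{R}^n$ a unit vector with at most $k$ nonzero entries; $\mathbf{x}_1,\dots,\mathbf{x}_m$ i.i.d. $\mathcal{N}(\mathbf{0},\mathbf{I}_n+\theta\mathbf{v}\mathbf{v}^\top)$; $\hat{\boldsymbol{\Gamma}}=\frac1m\sum_i\mathbf{x}_i\mathbf{x}_i^\top-\mathbf{I}_n$; $\mathbf{W}=\hat{\boldsymbol{\Gamma}}-\theta\mathbf{v}\mathbf{v}^\top$. $\mathbf{v}_S$ is the restriction of $\mathbf{v}$ to $S$, $\mathbf{A}_{S,U}$ a submatrix, $\|\cdot\|_2$ Euclidean/spectral norm. $v_{(1)}\ge v_{(2)}\ge\cdots$ are the sorted absolute entries of $\mathbf{v}$ and $s(p)=(\sum_{i=1}^pv_{(i)}^2)^{-1}$ for $1\le p\le k$. Fix an absolute constant $C_0>0$; $\mathcal{E}$ is the event that $\|\mathbf{W}_{S,S}\|_2\le C_0(1+\theta)\sqrt{|S|\log n/m}$ for all nonempty $S\subseteq[n]$. Absolute constants do not depend on $n,m,k,p,\theta,\mathbf{v},\gamma$. *)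

theory Defs
  imports Complex_Main
begin

text \<open>Vectors in R^n are functions nat => real read on indices {..<n};
  n x n matrices are functions nat => nat => real read on {..<n} x {..<n}.\<close>

definition sqnorm_on :: "nat set \<Rightarrow> (nat \<Rightarrow> real) \<Rightarrow> real" where
  "sqnorm_on S u = sqrt (\<Sum>i\<in>S. (u i)^2)"

definition spec_norm :: "(nat \<Rightarrow> nat \<Rightarrow> real) \<Rightarrow> nat set \<Rightarrow> nat set \<Rightarrow> real" where
  "spec_norm A S U = Sup {sqrt (\<Sum>i\<in>S. (\<Sum>j\<in>U. A i j * x j)^2) | x. (\<Sum>j\<in>U. (x j)^2) = 1}"

definition Gamma_hat :: "nat \<Rightarrow> (nat \<Rightarrow> nat \<Rightarrow> real) \<Rightarrow> nat \<Rightarrow> nat \<Rightarrow> real" where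
  "Gamma_hat m x i j = (1 / real m) * (\<Sum>l<m. x l i * x l j) - (if i = j then 1 else 0)"

definition W_mat :: "nat \<Rightarrow> (nat \<Rightarrow> nat \<Rightarrow> real) \<Rightarrow> real \<Rightarrow> (nat \<Rightarrow> real) \<Rightarrow> nat \<Rightarrow> nat \<Rightarrow> real" where
  "W_mat m x \<theta> v i j = Gamma_hat m x i j - \<theta> * v i * v j"

definition event_E :: "real \<Rightarrow> nat \<Rightarrow> nat \<Rightarrow> (nat \<Rightarrow> nat \<Rightarrow> real) \<Rightarrow> real \<Rightarrow> (nat \<Rightarrow> real) \<Rightarrow> bool" where
  "event_E C0 n m x \<theta> v \<longleftrightarrow>
     (\<forall>S. S \<subseteq> {..<n} \<and> S \<noteq> {} \<longrightarrow>
        spec_norm (W_mat m x \<theta> v) S S \<le> C0 * (1 + \<theta>) * sqrt (real (card S) * ln (real n) / real m))"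

text \<open>Sorted absolute entries v_(1) >= v_(2) >= ... (0-based list index) and s(p).\<close>
definition sorted_abs :: "nat \<Rightarrow> (nat \<Rightarrow> real) \<Rightarrow> real list" where
  "sorted_abs n v = rev (sort (map (\<lambda>i. \<bar>v i\<bar>) [0..<n]))"

definition s_fun :: "nat \<Rightarrow> (nat \<Rightarrow> real) \<Rightarrow> nat \<Rightarrow> real" where
  "s_fun n v p = 1 / (\<Sum>i<p. (sorted_abs n v ! i)^2)"

definition is_eigenpair_on :: "(nat \<Rightarrow> nat \<Rightarrow> real) \<Rightarrow> nat set \<Rightarrow> real \<Rightarrow> (nat \<Rightarrow> real) \<Rightarrow> bool" where
  "is_eigenpair_on A S \<mu> u \<longleftrightarrow> (\<exists>i\<in>S. u i \<noteq> 0) \<and>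
      (\<forall>i\<in>S. (\<Sum>j\<in>S. A i j * u j) = \<mu> * u i)"

definition top_eigvec_padded :: "nat \<Rightarrow> (nat \<Rightarrow> nat \<Rightarrow> real) \<Rightarrow> nat set \<Rightarrow> (nat \<Rightarrow> real) \<Rightarrow> bool" where
  "top_eigvec_padded n A S e \<longleftrightarrow>
     (\<forall>i. i \<notin> S \<longrightarrow> e i = 0) \<and> (\<Sum>i\<in>S. (e i)^2) = 1 \<and>
     (\<exists>lam. is_eigenpair_on A S lam e \<and> (\<forall>\<mu> u. is_eigenpair_on A S \<mu> u \<longrightarrow> \<mu> \<le> lam))"

definition top_entries :: "nat \<Rightarrow> nat \<Rightarrow> (nat \<Rightarrow> real) \<Rightarrow> nat set \<Rightarrow> bool" where
  "top_entries n q g T \<longleftrightarrow> T \<subseteq> {..<n} \<and> card T = q \<and>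
     (\<forall>i\<in>T. \<forall>j\<in>{..<n} - T. \<bar>g j\<bar> \<le> \<bar>g i\<bar>)"

definition mat_vec :: "nat \<Rightarrow> (nat \<Rightarrow> nat \<Rightarrow> real) \<Rightarrow> (nat \<Rightarrow> real) \<Rightarrow> nat \<Rightarrow> real" where
  "mat_vec n A u i = (\<Sum>j<n. A i j * u j)"

end

theory Submission
  imports Defs "HOL-Analysis.Analysis" "HOL-Combinatorics.Permutations"
begin

text \<open>Write \<open>Gamma_hat = \<theta> v v\<^sup>T + W\<close> and let \<open>\<sigma> = 1 / s(p+1)\<close> be the mass of the \<open>p+1\<close> largest
  entries of \<open>v\<close>, attained on an index set \<open>U\<close>. On the event \<open>E\<close> the sample-size condition makes
  the spectral norm of \<open>W\<close> on every index set of size at most \<open>2(p+1)\<close> smaller than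
  \<open>\<epsilon> = \<theta> \<gamma> (1 - sqrt \<gamma>) \<sigma> / 8\<close>.
  Comparing the Rayleigh quotients of the top eigenvector \<open>e\<close> and of \<open>v\<close> on \<open>S = S(p)\<close> gives
  \<open>\<theta> a\<^sup>2 \<ge> \<theta> |v\<^sub>S|\<^sup>2 - 2\<epsilon> \<ge> \<theta> \<gamma> \<sigma> / 4\<close> for the overlap \<open>a = \<langle>v, e\<rangle>\<close>.
  Now \<open>Gamma_hat e = \<theta> a v + W e\<close>, whose \<open>p+1\<close> largest entries (on \<open>T = S(p+1)\<close>) carry at least
  as much mass as its entries on \<open>U\<close>. Since \<open>W e\<close> is at most \<open>\<epsilon>\<close> on \<open>T\<close> and on \<open>U\<close>, this gives
  \<open>\<theta> |a| (|v\<^sub>U| - |v\<^sub>T|) \<le> 2\<epsilon>\<close>, which together with the lower bound on \<open>|a|\<close> forces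
  \<open>|v\<^sub>T| \<ge> sqrt (\<gamma> \<sigma>)\<close>.\<close>

section \<open>Quadratic forms and the Rayleigh quotient\<close>

definition quad_form :: "(nat \<Rightarrow> nat \<Rightarrow> real) \<Rightarrow> nat set \<Rightarrow> (nat \<Rightarrow> real) \<Rightarrow> real" where
  "quad_form A S w = (\<Sum>i\<in>S. w i * (\<Sum>j\<in>S. A i j * w j))"

lemma bilinear_form_sym:
  fixes A :: "nat \<Rightarrow> nat \<Rightarrow> real"
  assumes "\<And>i j. A i j = A j i"
  shows "(\<Sum>i\<in>S. x i * (\<Sum>j\<in>S. A i j * y j)) = (\<Sum>i\<in>S. y i * (\<Sum>j\<in>S. A i j * x j))"
proof -
  have "(\<Sum>i\<in>S. x i * (\<Sum>j\<in>S. A i j * y j)) = (\<Sum>i\<in>S. \<Sum>j\<in>S. x i * A i j * y j)"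
    by (simp add: sum_distrib_left mult.assoc)
  also have "\<dots> = (\<Sum>j\<in>S. \<Sum>i\<in>S. x i * A i j * y j)" by (rule sum.swap)
  also have "\<dots> = (\<Sum>j\<in>S. y j * (\<Sum>i\<in>S. A j i * x i))"
    by (simp add: sum_distrib_left assms ac_simps)
  finally show ?thesis .
qed

lemma quad_form_add_scaled:
  fixes A :: "nat \<Rightarrow> nat \<Rightarrow> real"
  assumes "\<And>i j. A i j = A j i"
  shows "quad_form A S (\<lambda>i. u i + t * r i) =
    quad_form A S u + 2 * t * (\<Sum>i\<in>S. r i * (\<Sum>j\<in>S. A i j * u j)) + t^2 * quad_form A S r"
proof -
  have "(u i + t * r i) * (\<Sum>j\<in>S. A i j * (u j + t * r j)) =
      u i * (\<Sum>j\<in>S. A i j * u j) + t * (u i * (\<Sum>j\<in>S. A i j * r j))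
      + t * (r i * (\<Sum>j\<in>S. A i j * u j)) + t^2 * (r i * (\<Sum>j\<in>S. A i j * r j))" for i
    by (simp add: sum.distrib sum_distrib_left algebra_simps power2_eq_square)
  then show ?thesis
    using bilinear_form_sym[where A = A and S = S and x = u and y = r] assms
    by (simp add: quad_form_def sum.distrib flip: sum_distrib_left)
qed

lemma quad_form_scale: "quad_form A S (\<lambda>i. c * w i) = c^2 * quad_form A S w"
  by (simp add: quad_form_def sum_distrib_left power2_eq_square algebra_simps)

lemma quad_form_cong: "(\<And>i. i \<in> S \<Longrightarrow> w i = w' i) \<Longrightarrow> quad_form A S w = quad_form A S w'"
  unfolding quad_form_def by (intro sum.cong refl) auto

lemma nonpos_of_le_quadratic:
  fixes a c :: real
  assumes "\<And>t. 0 < t \<Longrightarrow> a * t \<le> c * t^2"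
  shows "a \<le> 0"
proof (rule ccontr)
  assume "\<not> a \<le> 0"
  define t where "t = a / (\<bar>c\<bar> + 1)"
  have "t > 0" using \<open>\<not> a \<le> 0\<close> by (simp add: t_def)
  have "c * t \<le> \<bar>c\<bar> * t" using \<open>t > 0\<close> by (simp add: mult_right_mono)
  also have "\<dots> < a" using \<open>\<not> a \<le> 0\<close> by (simp add: t_def field_simps)
  finally have "c * t^2 < a * t" using \<open>t > 0\<close> by (simp add: power2_eq_square)
  then show False using assms[OF \<open>t > 0\<close>] by simp
qed

lemma compact_coordinate_box:
  "compact {x :: nat \<Rightarrow> real. \<forall>i. x i \<in> (if i \<in> S then {-1..1} else {0})}"
proof -
  have "compactin (product_topology (\<lambda>i. euclidean) UNIV) (PiE UNIV (\<lambda>i. if i \<in> S then {-1..1::real} else {0}))"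
    by (subst compactin_PiE) auto
  moreover have "PiE UNIV (\<lambda>i. if i \<in> S then {-1..1::real} else {0}) =
      {x. \<forall>i. x i \<in> (if i \<in> S then {-1..1} else {0})}"
    by (auto simp: PiE_UNIV_domain Pi_def)
  ultimately show ?thesis by (simp add: euclidean_product_topology)
qed

lemma quad_form_le_of_unit_sphere:
  assumes "finite S" and le: "\<And>y. (\<Sum>i\<in>S. (y i)^2) = 1 \<Longrightarrow> quad_form A S y \<le> M"
  shows "quad_form A S w \<le> M * (\<Sum>i\<in>S. (w i)^2)"
proof (cases "\<forall>i\<in>S. w i = 0")
  case True
  then show ?thesis by (simp add: quad_form_def)
next
  case False
  define N where "N = (\<Sum>i\<in>S. (w i)^2)"
  have "N > 0" using False assms(1) by (auto simp: N_def sum_nonneg sum_nonneg_eq_0_iff less_le)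
  define c where "c = 1 / sqrt N"
  have c2: "c^2 * N = 1" using \<open>N > 0\<close> by (simp add: c_def power_divide)
  then have "c^2 * quad_form A S w \<le> M"
    using le[of "\<lambda>i. c * w i"] by (simp add: quad_form_scale N_def power_mult_distrib flip: sum_distrib_left)
  then have "c^2 * quad_form A S w * N \<le> M * N" using \<open>N > 0\<close> by simp
  moreover have "c^2 * quad_form A S w * N = quad_form A S w"
    using c2 by (metis mult.assoc mult.commute mult_1_right)
  ultimately show ?thesis unfolding N_def by linarith
qed

lemma quad_form_attains_max_on_sphere:
  assumes "finite S" "S \<noteq> {}"
  obtains u where "(\<Sum>i\<in>S. (u i)^2) = 1"
    "\<And>w. quad_form A S w \<le> quad_form A S u * (\<Sum>i\<in>S. (w i)^2)"
proof -
  define N where "N w = (\<Sum>i\<in>S. (w i)^2)" for w :: "nat \<Rightarrow> real"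
  define K where "K = {x. \<forall>i. x i \<in> (if i \<in> S then {-1..1} else {0})} \<inter> {x. N x = 1}"
  have "compact K"
    unfolding K_def N_def
    by (intro compact_Int_closed compact_coordinate_box closed_Collect_eq continuous_intros
        continuous_on_product_coordinates)
  moreover obtain i0 where "i0 \<in> S" using assms(2) by blast
  then have "(\<lambda>i. if i = i0 then 1 else 0) \<in> K"
    using assms(1) by (simp add: K_def N_def if_distrib[of "\<lambda>x. x^2"] cong: if_cong)
  then have "K \<noteq> {}" by blast
  moreover have "continuous_on UNIV (quad_form A S)"
    unfolding quad_form_def by (intro continuous_intros continuous_on_product_coordinates)
  then have "continuous_on K (quad_form A S)" by (rule continuous_on_subset) simp
  ultimately obtain u where "u \<in> K" and u_max: "\<And>y. y \<in> K \<Longrightarrow> quad_form A S y \<le> quad_form A S u"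
    using continuous_attains_sup[of K "quad_form A S"] by blast
  have "quad_form A S y \<le> quad_form A S u" if "N y = 1" for y
  proof -
    define y' where "y' i = (if i \<in> S then y i else 0)" for i
    have "N y' = 1" using that by (simp add: N_def y'_def)
    moreover have "\<bar>y' i\<bar> \<le> 1" if "i \<in> S" for i
    proof -
      have "(y' i)^2 \<le> N y'" unfolding N_def using assms(1) that by (intro member_le_sum) auto
      then show ?thesis using \<open>N y' = 1\<close> abs_le_square_iff[of "y' i" 1] by simp
    qed
    ultimately have "y' \<in> K" by (auto simp: K_def y'_def abs_le_iff)
    then show ?thesis using u_max[of y'] quad_form_cong[of S y' y A] by (simp add: y'_def)
  qed
  moreover have "N u = 1" using \<open>u \<in> K\<close> by (simp add: K_def)
  ultimately show ?thesis using that quad_form_le_of_unit_sphere[OF assms(1)] unfolding N_def by blast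
qed

text \<open>Moving from the maximiser \<open>u\<close> along the residual \<open>r = A u - M u\<close> changes
  \<open>quad_form A S - M \<parallel>_\<parallel>\<^sup>2\<close> by \<open>2 t \<parallel>r\<parallel>\<^sup>2 + O(t\<^sup>2)\<close>, so \<open>r = 0\<close>.\<close>
lemma quad_form_max_imp_eigen:
  fixes A :: "nat \<Rightarrow> nat \<Rightarrow> real"
  assumes sym: "\<And>i j. A i j = A j i"
    and le: "\<And>w. quad_form A S w \<le> M * (\<Sum>i\<in>S. (w i)^2)"
    and eq: "quad_form A S u = M * (\<Sum>i\<in>S. (u i)^2)"
    and "finite S"
  shows "\<forall>i\<in>S. (\<Sum>j\<in>S. A i j * u j) = M * u i"
proof -
  define r where "r i = (\<Sum>j\<in>S. A i j * u j) - M * u i" for i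
  define Nr where "Nr = (\<Sum>i\<in>S. (r i)^2)"
  have "(\<Sum>i\<in>S. r i * (\<Sum>j\<in>S. A i j * u j)) - M * (\<Sum>i\<in>S. r i * u i) =
      (\<Sum>i\<in>S. r i * ((\<Sum>j\<in>S. A i j * u j) - M * u i))"
    by (simp add: sum_subtractf sum_distrib_left right_diff_distrib mult.left_commute)
  also have "\<dots> = Nr" by (simp only: r_def[symmetric] Nr_def power2_eq_square)
  finally have cross: "(\<Sum>i\<in>S. r i * (\<Sum>j\<in>S. A i j * u j)) - M * (\<Sum>i\<in>S. r i * u i) = Nr" .
  have "2 * Nr * t \<le> (M * Nr - quad_form A S r) * t^2" if "t > 0" for t
  proof -
    define X where "X = (\<Sum>i\<in>S. r i * (\<Sum>j\<in>S. A i j * u j))"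
    define Y where "Y = (\<Sum>i\<in>S. r i * u i)"
    have "(\<Sum>i\<in>S. (u i + t * r i)^2) = (\<Sum>i\<in>S. (u i)^2 + 2 * t * (r i * u i) + t^2 * (r i)^2)"
      by (intro sum.cong refl) (simp add: power2_eq_square algebra_simps)
    also have "\<dots> = (\<Sum>i\<in>S. (u i)^2) + 2 * t * Y + t^2 * Nr"
      by (simp add: Y_def Nr_def sum.distrib sum_distrib_left)
    finally have sq: "(\<Sum>i\<in>S. (u i + t * r i)^2) = (\<Sum>i\<in>S. (u i)^2) + 2 * t * Y + t^2 * Nr" .
    have "quad_form A S u + 2 * t * X + t^2 * quad_form A S r \<le>
        M * ((\<Sum>i\<in>S. (u i)^2) + 2 * t * Y + t^2 * Nr)"
      using le[of "\<lambda>i. u i + t * r i"] unfolding quad_form_add_scaled[OF sym] sq X_def .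
    moreover have "X = M * Y + Nr" using cross unfolding X_def Y_def by linarith
    ultimately show ?thesis using eq by (simp add: algebra_simps)
  qed
  then have "2 * Nr \<le> 0" by (rule nonpos_of_le_quadratic)
  then have "Nr = 0" by (simp add: Nr_def sum_nonneg order_antisym)
  then show ?thesis using \<open>finite S\<close> by (simp add: Nr_def r_def sum_nonneg_eq_0_iff)
qed

lemma symmetric_top_eigenpair:
  fixes A :: "nat \<Rightarrow> nat \<Rightarrow> real"
  assumes "finite S" "S \<noteq> {}" and sym: "\<And>i j. A i j = A j i"
  obtains \<mu> u where "is_eigenpair_on A S \<mu> u"
    "\<And>w. quad_form A S w \<le> \<mu> * (\<Sum>i\<in>S. (w i)^2)"
proof -
  obtain u where u1: "(\<Sum>i\<in>S. (u i)^2) = 1"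
    and le: "\<And>w. quad_form A S w \<le> quad_form A S u * (\<Sum>i\<in>S. (w i)^2)"
    using quad_form_attains_max_on_sphere[OF assms(1,2)] by blast
  have "\<forall>i\<in>S. (\<Sum>j\<in>S. A i j * u j) = quad_form A S u * u i"
    by (rule quad_form_max_imp_eigen[OF sym]) (use le u1 assms(1) in auto)
  moreover have "\<exists>i\<in>S. u i \<noteq> 0" by (rule ccontr) (use u1 in simp)
  ultimately show ?thesis using that le unfolding is_eigenpair_on_def by blast
qed

lemma quad_form_eigenvector:
  "is_eigenpair_on A S \<mu> u \<Longrightarrow> quad_form A S u = \<mu> * (\<Sum>i\<in>S. (u i)^2)"
  unfolding is_eigenpair_on_def quad_form_def
  by (simp add: sum_distrib_left power2_eq_square mult.left_commute)

text \<open>\<^const>\<open>top_eigvec_padded\<close> only says that the eigenvalue of \<open>e\<close> is the largest one; the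
  eigenpair attaining the maximal Rayleigh quotient turns this into the variational bound.\<close>
lemma top_eigvec_padded_maximizes_quad_form:
  fixes A :: "nat \<Rightarrow> nat \<Rightarrow> real"
  assumes "finite S" "S \<noteq> {}" "\<And>i j. A i j = A j i" and "top_eigvec_padded n A S e"
  shows "quad_form A S w \<le> quad_form A S e * (\<Sum>i\<in>S. (w i)^2)"
proof -
  obtain lam where e1: "(\<Sum>i\<in>S. (e i)^2) = 1" and eig: "is_eigenpair_on A S lam e"
    and top: "\<And>\<mu> u. is_eigenpair_on A S \<mu> u \<Longrightarrow> \<mu> \<le> lam"
    using assms(4) unfolding top_eigvec_padded_def by blast
  obtain \<mu> u where \<mu>: "is_eigenpair_on A S \<mu> u" and le: "\<And>w. quad_form A S w \<le> \<mu> * (\<Sum>i\<in>S. (w i)^2)"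
    using symmetric_top_eigenpair[where A = A, OF assms(1-3)] by blast
  have "\<mu> * (\<Sum>i\<in>S. (w i)^2) \<le> lam * (\<Sum>i\<in>S. (w i)^2)"
    using top[OF \<mu>] by (simp add: mult_right_mono sum_nonneg)
  then show ?thesis using le[of w] quad_form_eigenvector[OF eig] e1 by simp
qed

section \<open>Spectral norm bounds\<close>

lemma spec_norm_set_bdd_above:
  fixes A :: "nat \<Rightarrow> nat \<Rightarrow> real"
  shows "bdd_above {sqrt (\<Sum>i\<in>S. (\<Sum>j\<in>U. A i j * x j)^2) | x. (\<Sum>j\<in>U. (x j)^2) = 1}"
proof (rule bdd_aboveI, clarify)
  fix x :: "nat \<Rightarrow> real" assume x1: "(\<Sum>j\<in>U. (x j)^2) = 1"
  have "\<bar>\<Sum>j\<in>U. A i j * x j\<bar> \<le> L2_set (A i) U" for i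
  proof -
    have "\<bar>\<Sum>j\<in>U. A i j * x j\<bar> \<le> (\<Sum>j\<in>U. \<bar>A i j\<bar> * \<bar>x j\<bar>)"
      by (metis (no_types, lifting) abs_mult sum.cong sum_abs)
    also have "\<dots> \<le> L2_set (A i) U * L2_set x U" by (rule L2_set_mult_ineq)
    finally show ?thesis using x1 by (simp add: L2_set_def)
  qed
  then have "L2_set (\<lambda>i. \<bar>\<Sum>j\<in>U. A i j * x j\<bar>) S \<le> L2_set (\<lambda>i. L2_set (A i) U) S"
    by (intro L2_set_mono) auto
  then show "sqrt (\<Sum>i\<in>S. (\<Sum>j\<in>U. A i j * x j)^2) \<le> L2_set (\<lambda>i. L2_set (A i) U) S"
    by (simp add: L2_set_def)
qed

lemma L2_set_mat_vec_le_spec_norm: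
  assumes "finite U"
  shows "L2_set (\<lambda>i. \<Sum>j\<in>U. A i j * x j) S \<le> spec_norm A S U * L2_set x U"
proof (cases "L2_set x U = 0")
  case True
  then have "\<forall>j\<in>U. x j = 0" using L2_set_eq_0_iff[OF assms] by blast
  then show ?thesis using True by (simp add: L2_set_0')
next
  case False
  define c where "c = L2_set x U"
  have "c > 0" using False L2_set_nonneg[of x U] unfolding c_def by linarith
  have "(\<Sum>j\<in>U. (x j / c)^2) = 1"
    using \<open>c > 0\<close> by (simp add: c_def power_divide L2_set_def sum_nonneg flip: sum_divide_distrib)
  then have "sqrt (\<Sum>i\<in>S. (\<Sum>j\<in>U. A i j * (x j / c))^2) \<le> spec_norm A S U"
    unfolding spec_norm_def
    by (intro cSup_upper spec_norm_set_bdd_above) (auto intro!: exI[of _ "\<lambda>j. x j / c"])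
  moreover have "sqrt (\<Sum>i\<in>S. (\<Sum>j\<in>U. A i j * (x j / c))^2) = L2_set (\<lambda>i. \<Sum>j\<in>U. A i j * x j) S / c"
    using \<open>c > 0\<close>
    by (simp add: L2_set_def power_divide real_sqrt_divide flip: sum_divide_distrib)
  ultimately show ?thesis using \<open>c > 0\<close> by (simp add: c_def pos_divide_le_eq)
qed

lemma quad_form_abs_le_spec_norm:
  assumes "finite S"
  shows "\<bar>quad_form A S w\<bar> \<le> spec_norm A S S * (\<Sum>i\<in>S. (w i)^2)"
proof -
  have "\<bar>quad_form A S w\<bar> \<le> (\<Sum>i\<in>S. \<bar>w i\<bar> * \<bar>\<Sum>j\<in>S. A i j * w j\<bar>)"
    unfolding quad_form_def by (metis (no_types, lifting) abs_mult sum.cong sum_abs)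
  also have "\<dots> \<le> L2_set w S * L2_set (\<lambda>i. \<Sum>j\<in>S. A i j * w j) S" by (rule L2_set_mult_ineq)
  also have "\<dots> \<le> L2_set w S * (spec_norm A S S * L2_set w S)"
    by (rule mult_left_mono[OF L2_set_mat_vec_le_spec_norm[OF assms] L2_set_nonneg])
  also have "\<dots> = spec_norm A S S * (\<Sum>i\<in>S. (w i)^2)"
    by (simp add: L2_set_def power2_eq_square[symmetric] sum_nonneg)
  finally show ?thesis .
qed

lemma L2_set_mat_vec_le_spec_norm_superset:
  assumes "finite R" "S \<subseteq> R" "T \<subseteq> R" and "\<forall>i. i \<notin> S \<longrightarrow> e i = 0"
    and "(\<Sum>i\<in>S. (e i)^2) = 1"
  shows "L2_set (\<lambda>i. \<Sum>j\<in>S. A i j * e j) T \<le> spec_norm A R R"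
proof -
  have sum_R: "(\<Sum>j\<in>S. f j) = (\<Sum>j\<in>R. f j)" if "\<And>j. j \<notin> S \<Longrightarrow> f j = 0" for f :: "nat \<Rightarrow> real"
    by (rule sum.mono_neutral_left[OF assms(1,2)]) (use that in auto)
  have "L2_set (\<lambda>i. \<Sum>j\<in>S. A i j * e j) T \<le> L2_set (\<lambda>i. \<Sum>j\<in>S. A i j * e j) R"
    unfolding L2_set_def by (intro real_sqrt_le_mono sum_mono2 assms) auto
  also have "\<dots> = L2_set (\<lambda>i. \<Sum>j\<in>R. A i j * e j) R" using assms(4) by (simp add: sum_R)
  also have "\<dots> \<le> spec_norm A R R * L2_set e R" by (rule L2_set_mat_vec_le_spec_norm[OF assms(1)])
  also have "L2_set e R = 1" using assms(4,5) by (simp add: L2_set_def flip: sum_R)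
  finally show ?thesis by simp
qed

section \<open>Rank-one signal plus noise\<close>

lemma quad_form_rank_one_plus:
  assumes "\<And>i j. G i j = \<theta> * v i * v j + W i j"
  shows "quad_form G S w = \<theta> * (\<Sum>i\<in>S. v i * w i)^2 + quad_form W S w"
proof -
  define c where "c = (\<Sum>j\<in>S. v j * w j)"
  have "w i * (\<Sum>j\<in>S. G i j * w j) = \<theta> * c * (v i * w i) + w i * (\<Sum>j\<in>S. W i j * w j)" for i
    by (simp add: c_def assms algebra_simps sum.distrib sum_distrib_left)
  then have "quad_form G S w = \<theta> * c * c + quad_form W S w"
    by (simp add: quad_form_def sum.distrib c_def flip: sum_distrib_left)
  then show ?thesis by (simp add: c_def power2_eq_square)
qed

lemma top_eigvec_overlap:
  fixes G W :: "nat \<Rightarrow> nat \<Rightarrow> real"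
  assumes G: "\<And>i j. G i j = \<theta> * v i * v j + W i j" and sym: "\<And>i j. G i j = G j i"
    and "finite S" and top: "top_eigvec_padded n G S e" and pos: "(\<Sum>i\<in>S. (v i)^2) > 0"
  shows "\<theta> * (\<Sum>i\<in>S. v i * e i)^2 \<ge> \<theta> * (\<Sum>i\<in>S. (v i)^2) - 2 * spec_norm W S S"
proof -
  define N where "N = (\<Sum>i\<in>S. (v i)^2)"
  have "S \<noteq> {}" using pos by auto
  have e1: "(\<Sum>i\<in>S. (e i)^2) = 1" using top by (simp add: top_eigvec_padded_def)
  have "quad_form G S v = \<theta> * N^2 + quad_form W S v"
    by (simp add: quad_form_rank_one_plus[OF G] N_def power2_eq_square)
  moreover have "- spec_norm W S S * N \<le> quad_form W S v"
    using quad_form_abs_le_spec_norm[OF \<open>finite S\<close>, of W v] by (simp add: N_def)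
  moreover have "quad_form G S v \<le> quad_form G S e * N"
    unfolding N_def by (rule top_eigvec_padded_maximizes_quad_form[OF \<open>finite S\<close> \<open>S \<noteq> {}\<close> sym top])
  moreover have "quad_form G S e \<le> \<theta> * (\<Sum>i\<in>S. v i * e i)^2 + spec_norm W S S"
    using quad_form_abs_le_spec_norm[OF \<open>finite S\<close>, of W e] e1
    by (simp add: quad_form_rank_one_plus[OF G])
  then have "quad_form G S e * N \<le> (\<theta> * (\<Sum>i\<in>S. v i * e i)^2 + spec_norm W S S) * N"
    using pos by (simp add: N_def mult_right_mono)
  ultimately have "\<theta> * N^2 - spec_norm W S S * N \<le> (\<theta> * (\<Sum>i\<in>S. v i * e i)^2 + spec_norm W S S) * N"
    by linarith
  then have "(\<theta> * N - 2 * spec_norm W S S) * N \<le> (\<theta> * (\<Sum>i\<in>S. v i * e i)^2) * N"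
    by (simp add: algebra_simps power2_eq_square)
  then show ?thesis using pos by (simp add: N_def)
qed

lemma mat_vec_rank_one_plus:
  assumes "\<And>i j. G i j = \<theta> * v i * v j + W i j" and "S \<subseteq> {..<n}"
    and "\<forall>i. i \<notin> S \<longrightarrow> e i = 0"
  shows "mat_vec n G e = (\<lambda>i. \<theta> * (\<Sum>j\<in>S. v j * e j) * v i + (\<Sum>j\<in>S. W i j * e j))"
proof
  fix i
  have "mat_vec n G e i = (\<Sum>j\<in>S. G i j * e j)"
    unfolding mat_vec_def by (rule sum.mono_neutral_right) (use assms(2,3) in auto)
  then show "mat_vec n G e i = \<theta> * (\<Sum>j\<in>S. v j * e j) * v i + (\<Sum>j\<in>S. W i j * e j)"
    by (simp add: assms(1) algebra_simps sum.distrib sum_distrib_left)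
qed

lemma top_entries_L2_set_ge:
  assumes top: "top_entries n q g T" and U: "U \<subseteq> {..<n}" "card U = q"
  shows "L2_set g U \<le> L2_set g T"
proof -
  have T: "T \<subseteq> {..<n}" "card T = q"
    and dom: "\<And>i j. i \<in> T \<Longrightarrow> j \<in> {..<n} - T \<Longrightarrow> \<bar>g j\<bar> \<le> \<bar>g i\<bar>"
    using top unfolding top_entries_def by auto
  have fin: "finite T" "finite U" using T U finite_subset by auto
  have "card (U - T) = card U - card (U \<inter> T)" "card (T - U) = card T - card (T \<inter> U)"
    using fin by (simp_all add: card_Diff_subset_Int)
  then have "card (U - T) = card (T - U)" using T(2) U(2) by (simp add: Int_commute)
  then obtain h where h: "bij_betw h (U - T) (T - U)"
    using finite_same_card_bij[of "U - T" "T - U"] fin by auto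
  have "(\<Sum>i\<in>U - T. (g i)^2) \<le> (\<Sum>i\<in>U - T. (g (h i))^2)"
  proof (rule sum_mono)
    fix i assume i: "i \<in> U - T"
    then have "h i \<in> T" using h bij_betwE by blast
    moreover have "i \<in> {..<n} - T" using i U by auto
    ultimately have "\<bar>g i\<bar> \<le> \<bar>g (h i)\<bar>" by (rule dom)
    then show "(g i)^2 \<le> (g (h i))^2" by (simp add: abs_le_square_iff)
  qed
  also have "\<dots> = (\<Sum>i\<in>T - U. (g i)^2)" by (rule sum.reindex_bij_betw[OF h])
  finally have "(\<Sum>i\<in>U - T. (g i)^2) \<le> (\<Sum>i\<in>T - U. (g i)^2)" .
  then have "(\<Sum>i\<in>U. (g i)^2) \<le> (\<Sum>i\<in>T. (g i)^2)"
    using sum.Int_Diff[OF fin(2), of _ T] sum.Int_Diff[OF fin(1), of _ U, unfolded Int_commute[of T U]]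
    by (metis add_le_cancel_left add.commute)
  then show ?thesis unfolding L2_set_def by (rule real_sqrt_le_mono)
qed

lemma L2_set_scale: "L2_set (\<lambda>i. c * f i) A = \<bar>c\<bar> * L2_set f A"
  by (simp add: L2_set_def power_mult_distrib real_sqrt_mult flip: sum_distrib_left)

lemma top_entries_signal_bound:
  assumes "top_entries n q (\<lambda>i. c * v i + w i) T" "U \<subseteq> {..<n}" "card U = q"
  shows "\<bar>c\<bar> * L2_set v U \<le> \<bar>c\<bar> * L2_set v T + L2_set w T + L2_set w U"
proof -
  have "\<bar>c\<bar> * L2_set v U = L2_set (\<lambda>i. (c * v i + w i) + (- w i)) U"
    by (simp add: L2_set_scale)
  also have "\<dots> \<le> L2_set (\<lambda>i. c * v i + w i) U + L2_set w U"
    using L2_set_triangle_ineq[of "\<lambda>i. c * v i + w i" "\<lambda>i. - w i" U] by (simp add: L2_set_def)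
  also have "L2_set (\<lambda>i. c * v i + w i) U \<le> L2_set (\<lambda>i. c * v i + w i) T"
    by (rule top_entries_L2_set_ge[OF assms])
  also have "\<dots> \<le> \<bar>c\<bar> * L2_set v T + L2_set w T"
    using L2_set_triangle_ineq[of "\<lambda>i. c * v i" w T] by (simp add: L2_set_scale)
  finally show ?thesis by simp
qed

section \<open>Sorted magnitudes\<close>

lemma length_sorted_abs [simp]: "length (sorted_abs n v) = n"
  by (simp add: sorted_abs_def)

lemma set_sorted_abs: "set (sorted_abs n v) = (\<lambda>i. \<bar>v i\<bar>) ` {..<n}"
  by (auto simp: sorted_abs_def)

lemma sorted_abs_nth_antimono:
  assumes "i \<le> j" "j < n"
  shows "sorted_abs n v ! j \<le> sorted_abs n v ! i"
proof -
  define xs where "xs = sort (map (\<lambda>i. \<bar>v i\<bar>) [0..<n])"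
  have "xs ! (n - Suc j) \<le> xs ! (n - Suc i)"
    using assms by (intro sorted_nth_mono) (auto simp: xs_def)
  moreover have "length xs = n" by (simp add: xs_def)
  ultimately show ?thesis using assms by (simp add: sorted_abs_def rev_nth flip: xs_def)
qed

lemma sorted_abs_nth_nonneg: "i < n \<Longrightarrow> 0 \<le> sorted_abs n v ! i"
  using nth_mem[of i "sorted_abs n v"] by (auto simp: set_sorted_abs)

lemma abs_le_sorted_abs_0: "i < n \<Longrightarrow> \<bar>v i\<bar> \<le> sorted_abs n v ! 0"
proof -
  assume "i < n"
  then have "\<bar>v i\<bar> \<in> set (sorted_abs n v)" by (simp add: set_sorted_abs)
  then obtain k where "k < n" "sorted_abs n v ! k = \<bar>v i\<bar>" by (auto simp: in_set_conv_nth)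
  then show ?thesis using sorted_abs_nth_antimono[of 0 k n v] by simp
qed

lemma sum_sorted_abs_Suc_le_double:
  assumes "1 \<le> p" "p < n"
  shows "(\<Sum>i<Suc p. (sorted_abs n v ! i)^2) \<le> 2 * (\<Sum>i<p. (sorted_abs n v ! i)^2)"
proof -
  have "(sorted_abs n v ! p)^2 \<le> (sorted_abs n v ! 0)^2"
    using assms sorted_abs_nth_antimono[of 0 p n v] sorted_abs_nth_nonneg[of p n v]
    by (intro power_mono) auto
  also have "\<dots> \<le> (\<Sum>i<p. (sorted_abs n v ! i)^2)"
    using assms by (intro member_le_sum) auto
  finally show ?thesis by simp
qed

lemma sum_sorted_abs_pos:
  assumes "i < n" "v i \<noteq> 0" "0 < q"
  shows "0 < (\<Sum>j<q. (sorted_abs n v ! j)^2)"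
proof -
  have "0 < (sorted_abs n v ! 0)^2" using abs_le_sorted_abs_0[OF assms(1), of v] assms(2) by simp
  also have "\<dots> \<le> (\<Sum>j<q. (sorted_abs n v ! j)^2)" using assms(3) by (intro member_le_sum) auto
  finally show ?thesis .
qed

lemma sorted_abs_top_set:
  assumes "q \<le> n"
  obtains U where "U \<subseteq> {..<n}" "card U = q" "(\<Sum>i\<in>U. (v i)^2) = (\<Sum>i<q. (sorted_abs n v ! i)^2)"
proof -
  define xs where "xs = map (\<lambda>i. \<bar>v i\<bar>) [0..<n]"
  have "mset (sorted_abs n v) = mset xs" by (simp add: sorted_abs_def xs_def)
  then obtain \<pi> where \<pi>: "\<pi> permutes {..<length xs}" "permute_list \<pi> xs = sorted_abs n v"
    by (rule mset_eq_permutation)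
  have perm: "\<pi> permutes {..<n}" using \<pi>(1) by (simp add: xs_def)
  have img: "\<pi> i < n" if "i < n" for i using permutes_in_image[OF perm] that by simp
  have nth: "sorted_abs n v ! i = \<bar>v (\<pi> i)\<bar>" if "i < n" for i
    using img[OF that] that permute_list_nth[OF \<pi>(1), of i] unfolding \<pi>(2) by (simp add: xs_def)
  have inj: "inj_on \<pi> {..<q}" using permutes_inj[OF perm] by (rule inj_on_subset) simp
  show ?thesis
  proof
    show "\<pi> ` {..<q} \<subseteq> {..<n}" using assms img by auto
    show "card (\<pi> ` {..<q}) = q" using card_image[OF inj] by simp
    show "(\<Sum>i\<in>\<pi> ` {..<q}. (v i)^2) = (\<Sum>i<q. (sorted_abs n v ! i)^2)"
      using assms by (auto simp: sum.reindex[OF inj] nth intro!: sum.cong)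
  qed
qed

lemma sqnorm_on_ge_imp_mass_Suc_le:
  assumes "sqnorm_on S v \<ge> sqrt (\<gamma> / s_fun n v p)" "0 < \<gamma>" "1 \<le> p" "p < n"
  shows "\<gamma> * (\<Sum>i<p + 1. (sorted_abs n v ! i)^2) \<le> 2 * (\<Sum>i\<in>S. (v i)^2)"
proof -
  have "\<gamma> * (\<Sum>i<p. (sorted_abs n v ! i)^2) \<le> (\<Sum>i\<in>S. (v i)^2)"
    using assms(1) by (simp add: sqnorm_on_def s_fun_def)
  moreover have "\<gamma> * (\<Sum>i<p + 1. (sorted_abs n v ! i)^2) \<le> \<gamma> * (2 * (\<Sum>i<p. (sorted_abs n v ! i)^2))"
    using sum_sorted_abs_Suc_le_double[OF assms(3,4)] assms(2) by (intro mult_left_mono) auto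
  ultimately show ?thesis by linarith
qed

section \<open>Noise bounds on the event E\<close>

lemma mult_sqrt_divide_le:
  fixes c a m \<epsilon> :: real
  assumes "c > 0" "m > 0" "\<epsilon> > 0" "m \<ge> c^2 * a / \<epsilon>^2"
  shows "c * sqrt (a / m) \<le> \<epsilon>"
proof -
  have "c^2 * a / m \<le> \<epsilon>^2" using assms by (simp add: field_simps)
  then have "sqrt (c^2 * a / m) \<le> \<epsilon>" using assms(3) by (intro real_le_lsqrt) auto
  then show ?thesis using assms(1) by (simp add: real_sqrt_mult real_sqrt_divide)
qed

lemma event_E_spec_norm_le:
  assumes "event_E C0 n m x \<theta> v" "C0 > 0" "\<theta> > 0" "m > 0" "n \<ge> 1"
    and "R \<subseteq> {..<n}" "R \<noteq> {}" "card R \<le> q"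
    and "\<epsilon> > 0" "real m \<ge> C0^2 * (1 + \<theta>)^2 * (real q * ln (real n)) / \<epsilon>^2"
  shows "spec_norm (W_mat m x \<theta> v) R R \<le> \<epsilon>"
proof -
  have "spec_norm (W_mat m x \<theta> v) R R \<le> C0 * (1 + \<theta>) * sqrt (real (card R) * ln (real n) / real m)"
    using assms(1,6,7) by (simp add: event_E_def)
  also have "\<dots> \<le> C0 * (1 + \<theta>) * sqrt (real q * ln (real n) / real m)"
    using assms(2-5,8) by (intro mult_left_mono real_sqrt_le_mono divide_right_mono mult_right_mono) auto
  also have "\<dots> \<le> \<epsilon>"
    using assms(2-4,9,10) by (intro mult_sqrt_divide_le) (auto simp: power_mult_distrib)
  finally show ?thesis .
qed

lemma event_E_spec_norm_le_sample_size:
  assumes "event_E C0 n m x \<theta> v" "C0 > 0" "\<theta> > 0" "0 < \<gamma>" "\<gamma> < 1" "\<sigma> > 0" "m \<ge> 1" "n \<ge> 2"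
    and "real m \<ge> 128 * C0^2 * (1 + \<theta>)^2 / (\<theta>^2 * \<gamma>^2 * (1 - sqrt \<gamma>)^2)
                 * real (p + 1) * (1 / \<sigma>)^2 * ln (real n)"
    and "R \<subseteq> {..<n}" "R \<noteq> {}" "card R \<le> 2 * (p + 1)"
  shows "spec_norm (W_mat m x \<theta> v) R R \<le> \<theta> * \<gamma> * (1 - sqrt \<gamma>) * \<sigma> / 8"
proof (rule event_E_spec_norm_le[OF assms(1-3) _ _ assms(10-12)])
  have "sqrt \<gamma> < 1" using assms(5) by simp
  then show "\<theta> * \<gamma> * (1 - sqrt \<gamma>) * \<sigma> / 8 > 0" using assms(3,4,6) by simp
  have "C0^2 * (1 + \<theta>)^2 * (real (2 * (p + 1)) * ln (real n)) / (\<theta> * \<gamma> * (1 - sqrt \<gamma>) * \<sigma> / 8)^2 =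
      128 * C0^2 * (1 + \<theta>)^2 / (\<theta>^2 * \<gamma>^2 * (1 - sqrt \<gamma>)^2) * real (p + 1) * (1 / \<sigma>)^2 * ln (real n)"
    using assms(3,4,6) \<open>sqrt \<gamma> < 1\<close> unfolding power_divide power_mult_distrib by (simp add: field_simps)
  then show "real m \<ge> C0^2 * (1 + \<theta>)^2 * (real (2 * (p + 1)) * ln (real n)) /
      (\<theta> * \<gamma> * (1 - sqrt \<gamma>) * \<sigma> / 8)^2"
    using assms(9) by simp
qed (use assms(7,8) in auto)

lemma overlap_forces_capture:
  fixes \<theta> \<gamma> \<sigma> N a t \<epsilon> :: real
  assumes "\<theta> > 0" "0 < \<gamma>" "\<gamma> < 1" "\<sigma> > 0" and N: "\<gamma> * \<sigma> \<le> 2 * N"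
    and overlap: "\<theta> * N - 2 * \<epsilon> \<le> \<theta> * a^2"
    and capture: "\<theta> * \<bar>a\<bar> * sqrt \<sigma> \<le> \<theta> * \<bar>a\<bar> * t + 2 * \<epsilon>"
    and \<epsilon>: "\<epsilon> \<le> \<theta> * \<gamma> * (1 - sqrt \<gamma>) * \<sigma> / 8"
  shows "sqrt \<gamma> * sqrt \<sigma> \<le> t"
proof (rule ccontr)
  assume lt: "\<not> sqrt \<gamma> * sqrt \<sigma> \<le> t"
  define g s where "g = sqrt \<gamma>" and "s = sqrt \<sigma>"
  have g: "0 < g" "g < 1" "g^2 = \<gamma>" and s: "0 < s" "s^2 = \<sigma>"
    using assms(2-4) by (auto simp: g_def s_def)
  have "\<theta> * \<gamma> * \<sigma> * (1 - g) \<le> \<theta> * \<gamma> * \<sigma>"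
    using assms(1,2,4) g(1) by (intro mult_left_le) auto
  then have "\<epsilon> \<le> \<theta> * \<gamma> * \<sigma> / 8" using \<epsilon> by (simp add: g_def algebra_simps)
  moreover have "\<theta> * (\<gamma> * \<sigma>) \<le> \<theta> * (2 * N)" using N assms(1) by (intro mult_left_mono) auto
  ultimately have "\<theta> * (\<gamma> * \<sigma> / 4) \<le> \<theta> * a^2" using overlap by (simp add: algebra_simps)
  then have "\<theta> * (g * s / 2)^2 \<le> \<theta> * a^2" using g s by (simp add: power_mult_distrib power_divide)
  then have "g * s / 2 \<le> \<bar>a\<bar>"
    using assms(1) g s by (simp add: abs_le_square_iff[symmetric] abs_of_pos)
  have "0 < g * s / 2" using g(1) s(1) by simp
  then have "0 < \<theta> * \<bar>a\<bar>" using \<open>g * s / 2 \<le> \<bar>a\<bar>\<close> assms(1) by simp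
  moreover have "s * (1 - g) < s - t" using lt by (simp add: g_def s_def algebra_simps)
  ultimately have "\<theta> * \<bar>a\<bar> * (s * (1 - g)) < \<theta> * \<bar>a\<bar> * (s - t)"
    by (rule mult_strict_left_mono[rotated])
  also have "\<dots> \<le> 2 * \<epsilon>" using capture by (simp add: s_def algebra_simps)
  also have "\<dots> \<le> \<theta> * \<gamma> * (1 - sqrt \<gamma>) * \<sigma> / 4" using \<epsilon> by simp
  also have "\<dots> = \<theta> * g^2 * (1 - g) * s^2 / 4" unfolding g(3) s(2) by (simp add: g_def)
  also have "\<dots> = \<theta> * (g^2 * s / 4) * (s * (1 - g))" by (simp add: power2_eq_square)
  finally have "(\<theta> * (s * (1 - g))) * \<bar>a\<bar> < (\<theta> * (s * (1 - g))) * (g^2 * s / 4)"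
    by (simp only: ac_simps)
  then have "\<bar>a\<bar> < g^2 * s / 4"
    using assms(1) g s by (simp add: mult_less_cancel_left_pos)
  moreover have "g^2 < 2 * g" using mult_strict_left_mono[of g 2 g] g(1,2) by (simp add: power2_eq_square)
  then have "g^2 * s / 4 < g * s / 2" using s(1) by (simp add: field_simps)
  ultimately show False using \<open>g * s / 2 \<le> \<bar>a\<bar>\<close> by linarith
qed

lemma support_growth_step:
  fixes G W :: "nat \<Rightarrow> nat \<Rightarrow> real"
  assumes G: "\<And>i j. G i j = \<theta> * v i * v j + W i j" and sym: "\<And>i j. G i j = G j i"
    and "\<theta> > 0" "0 < \<gamma>" "\<gamma> < 1"
    and S: "S \<subseteq> {..<n}" and e: "top_eigvec_padded n G S e"
    and T: "top_entries n q (mat_vec n G e) T"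
    and U: "U \<subseteq> {..<n}" "card U = q" "(\<Sum>i\<in>U. (v i)^2) = \<sigma>" "\<sigma> > 0"
    and signal: "\<gamma> * \<sigma> \<le> 2 * (\<Sum>i\<in>S. (v i)^2)"
    and noise: "\<And>R. R \<subseteq> {..<n} \<Longrightarrow> R \<noteq> {} \<Longrightarrow> card R \<le> card S + q \<Longrightarrow> spec_norm W R R \<le> \<epsilon>"
    and \<epsilon>: "\<epsilon> \<le> \<theta> * \<gamma> * (1 - sqrt \<gamma>) * \<sigma> / 8"
  shows "sqrt \<gamma> * sqrt \<sigma> \<le> L2_set v T"
proof -
  define a where "a = (\<Sum>j\<in>S. v j * e j)"
  define w where "w i = (\<Sum>j\<in>S. W i j * e j)" for i
  have "finite S" using S finite_subset by blast
  have e0: "\<forall>i. i \<notin> S \<longrightarrow> e i = 0" and e1: "(\<Sum>i\<in>S. (e i)^2) = 1"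
    using e by (auto simp: top_eigvec_padded_def)
  have "0 < \<gamma> * \<sigma>" using \<open>\<gamma> > 0\<close> \<open>\<sigma> > 0\<close> by simp
  then have vS: "(\<Sum>i\<in>S. (v i)^2) > 0" using signal by linarith
  then have "S \<noteq> {}" by auto
  have "\<theta> * (\<Sum>i\<in>S. (v i)^2) - 2 * \<epsilon> \<le> \<theta> * a^2"
    using top_eigvec_overlap[OF G sym \<open>finite S\<close> e vS] noise[OF S \<open>S \<noteq> {}\<close>]
    by (simp add: a_def)
  moreover have "\<theta> * \<bar>a\<bar> * L2_set v U \<le> \<theta> * \<bar>a\<bar> * L2_set v T + 2 * \<epsilon>"
  proof -
    have T': "top_entries n q (\<lambda>i. (\<theta> * a) * v i + w i) T"
      using T by (simp add: mat_vec_rank_one_plus[OF G S e0] a_def w_def)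
    have "L2_set w R \<le> \<epsilon>" if "R = T \<or> R = U" for R
    proof -
      have "R \<subseteq> {..<n}" "card R = q"
        using that T U(1,2) by (auto simp: top_entries_def)
      then have "L2_set w R \<le> spec_norm W (R \<union> S) (R \<union> S)"
        unfolding w_def using \<open>finite S\<close> e0 e1
        by (intro L2_set_mat_vec_le_spec_norm_superset) (auto intro: finite_subset)
      also have "\<dots> \<le> \<epsilon>"
        using \<open>R \<subseteq> {..<n}\<close> \<open>card R = q\<close> S \<open>S \<noteq> {}\<close> card_Un_le[of R S]
        by (intro noise) auto
      finally show ?thesis .
    qed
    then have "L2_set w T \<le> \<epsilon>" "L2_set w U \<le> \<epsilon>" by auto
    then show ?thesis
      using top_entries_signal_bound[OF T' U(1,2)] \<open>\<theta> > 0\<close> by (simp add: abs_mult)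
  qed
  ultimately show ?thesis
    using overlap_forces_capture[OF \<open>\<theta> > 0\<close> \<open>0 < \<gamma>\<close> \<open>\<gamma> < 1\<close> \<open>\<sigma> > 0\<close> signal _ _ \<epsilon>] U(3)
    by (simp add: L2_set_def)
qed

theorem proposition4:
  fixes C0 :: real
  assumes "C0 > 0"
  shows "\<exists>C>0. \<forall>(n::nat) (m::nat) (k::nat) (\<theta>::real) (v::nat \<Rightarrow> real)
      (x::nat \<Rightarrow> nat \<Rightarrow> real) (p::nat) (\<gamma>::real) (Sp::nat set) (e::nat \<Rightarrow> real) (Sp1::nat set).
      n \<ge> 2 \<longrightarrow> m \<ge> 1 \<longrightarrow> \<theta> > 0 \<longrightarrow> 1 \<le> k \<longrightarrow> k \<le> n \<longrightarrow>
      (\<Sum>i<n. (v i)^2) = 1 \<longrightarrow> card {i\<in>{..<n}. v i \<noteq> 0} \<le> k \<longrightarrow>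
      event_E C0 n m x \<theta> v \<longrightarrow>
      1 \<le> p \<longrightarrow> p \<le> k - 1 \<longrightarrow> 0 < \<gamma> \<longrightarrow> \<gamma> < 1 \<longrightarrow>
      Sp \<subseteq> {..<n} \<longrightarrow> card Sp = p \<longrightarrow>
      top_eigvec_padded n (Gamma_hat m x) Sp e \<longrightarrow>
      top_entries n (p + 1) (mat_vec n (Gamma_hat m x) e) Sp1 \<longrightarrow>
      real m \<ge> C * (1 + \<theta>)^2 / (\<theta>^2 * \<gamma>^2 * (1 - sqrt \<gamma>)^2)
                 * real (p + 1) * (s_fun n v (p + 1))^2 * ln (real n) \<longrightarrow>
      sqnorm_on Sp v \<ge> sqrt (\<gamma> / s_fun n v p) \<longrightarrow>
      sqnorm_on Sp1 v \<ge> sqrt (\<gamma> / s_fun n v (p + 1))"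
proof (intro exI[of _ "128 * C0^2"] conjI allI impI)
  show "128 * C0^2 > 0" using assms by simp
  fix n m k :: nat and \<theta> \<gamma> :: real and v e :: "nat \<Rightarrow> real" and x :: "nat \<Rightarrow> nat \<Rightarrow> real"
    and p :: nat and Sp Sp1 :: "nat set"
  assume "n \<ge> 2" "m \<ge> 1" "\<theta> > 0" "1 \<le> k" "k \<le> n" and v1: "(\<Sum>i<n. (v i)^2) = 1"
    and "card {i\<in>{..<n}. v i \<noteq> 0} \<le> k" and E: "event_E C0 n m x \<theta> v" and "1 \<le> p" "p \<le> k - 1"
    and "0 < \<gamma>" "\<gamma> < 1" "Sp \<subseteq> {..<n}" "card Sp = p"
    and e: "top_eigvec_padded n (Gamma_hat m x) Sp e"
    and T: "top_entries n (p + 1) (mat_vec n (Gamma_hat m x) e) Sp1"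
    and m: "real m \<ge> 128 * C0^2 * (1 + \<theta>)^2 / (\<theta>^2 * \<gamma>^2 * (1 - sqrt \<gamma>)^2)
                 * real (p + 1) * (s_fun n v (p + 1))^2 * ln (real n)"
    and signal: "sqnorm_on Sp v \<ge> sqrt (\<gamma> / s_fun n v p)"
  define \<sigma> where "\<sigma> = (\<Sum>i<p + 1. (sorted_abs n v ! i)^2)"
  have sf: "s_fun n v (p + 1) = 1 / \<sigma>" by (simp add: s_fun_def \<sigma>_def)
  have "\<exists>i<n. v i \<noteq> 0" by (rule ccontr) (use v1 in simp)
  then have "\<sigma> > 0" unfolding \<sigma>_def using sum_sorted_abs_pos[of _ n v "p + 1"] by auto
  have "p + 1 \<le> n" using \<open>1 \<le> p\<close> \<open>p \<le> k - 1\<close> \<open>k \<le> n\<close> by linarith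
  then obtain U where U: "U \<subseteq> {..<n}" "card U = p + 1" "(\<Sum>i\<in>U. (v i)^2) = \<sigma>"
    unfolding \<sigma>_def by (rule sorted_abs_top_set)
  have "sqrt \<gamma> * sqrt \<sigma> \<le> L2_set v Sp1"
  proof (rule support_growth_step[where W = "W_mat m x \<theta> v", OF _ _ \<open>\<theta> > 0\<close> \<open>0 < \<gamma>\<close> \<open>\<gamma> < 1\<close>
        \<open>Sp \<subseteq> {..<n}\<close> e T U \<open>\<sigma> > 0\<close>])
    show "\<gamma> * \<sigma> \<le> 2 * (\<Sum>i\<in>Sp. (v i)^2)"
      unfolding \<sigma>_def using sqnorm_on_ge_imp_mass_Suc_le[OF signal] \<open>0 < \<gamma>\<close> \<open>1 \<le> p\<close> \<open>p + 1 \<le> n\<close> by simp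
    show "spec_norm (W_mat m x \<theta> v) R R \<le> \<theta> * \<gamma> * (1 - sqrt \<gamma>) * \<sigma> / 8"
      if "R \<subseteq> {..<n}" "R \<noteq> {}" "card R \<le> card Sp + (p + 1)" for R
      using event_E_spec_norm_le_sample_size[OF E assms \<open>\<theta> > 0\<close> \<open>0 < \<gamma>\<close> \<open>\<gamma> < 1\<close> \<open>\<sigma> > 0\<close>
          \<open>m \<ge> 1\<close> \<open>n \<ge> 2\<close> m[unfolded sf] that(1,2)] that(3) \<open>card Sp = p\<close> by simp
  qed (simp_all add: W_mat_def Gamma_hat_def mult.commute)
  then show "sqnorm_on Sp1 v \<ge> sqrt (\<gamma> / s_fun n v (p + 1))"
    unfolding sqnorm_on_def sf by (simp add: L2_set_def real_sqrt_mult)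
qed

end
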